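(* Let $G$ be a connected $r$-regular finite simple graph on $n$ vertices, and let the spectrum of its adjacency matrix $A_G$ be $r,\lambda_2,\lambda_3,\dots,\lambda_n$ (listed with multiplicity, not necessarily distinct). Let $m$ be the maximum multiplicity of a value in the list $\lambda_2,\dots,\lambda_n$. Then $\mathrm{mur}(G)=n-(m+1)$.
   Context: For a finite simple undirected graph $G$ on vertices $v_1,\dots,v_n$, let $A_G$ be its $(0,1)$-adjacency matrix, $D_G=\mathrm{diag}(d_1,\dots,d_n)$ with $d_i$ the degree of $v_i$, $I$ the $n\times n$ identity matrix and $J$ the $n\times n$ all-ones matrix. A universal adjacency matrix of $G$ is any matrix $\alpha A_G+\beta I+\gamma J+\delta D_G$ with real scalars $\alpha,\beta,\gamma,\delta$ and $\alpha\neq 0$. The minimum universal rank $\mathrm{mur}(G)$ is the minimum rank over all universal adjacency matrices of $G$. *)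

theory Defs
  imports "HOL-Analysis.Analysis" "HOL-Computational_Algebra.Polynomial"
begin

definition simple_graph :: "('n::finite \<Rightarrow> 'n \<Rightarrow> bool) \<Rightarrow> bool" where
  "simple_graph E \<longleftrightarrow> (\<forall>i j. E i j \<longrightarrow> E j i) \<and> (\<forall>i. \<not> E i i)"

definition degree :: "('n::finite \<Rightarrow> 'n \<Rightarrow> bool) \<Rightarrow> 'n \<Rightarrow> nat" where
  "degree E i = card {j. E i j}"

definition regular :: "('n::finite \<Rightarrow> 'n \<Rightarrow> bool) \<Rightarrow> nat \<Rightarrow> bool" where
  "regular E r \<longleftrightarrow> (\<forall>i. degree E i = r)"

definition connected_graph :: "('n::finite \<Rightarrow> 'n \<Rightarrow> bool) \<Rightarrow> bool" where
  "connected_graph E \<longleftrightarrow> (\<forall>i j. E\<^sup>*\<^sup>* i j)"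

definition adj_matrix :: "('n::finite \<Rightarrow> 'n \<Rightarrow> bool) \<Rightarrow> real^'n^'n" where
  "adj_matrix E = (\<chi> i j. if E i j then 1 else 0)"

definition deg_matrix :: "('n::finite \<Rightarrow> 'n \<Rightarrow> bool) \<Rightarrow> real^'n^'n" where
  "deg_matrix E = (\<chi> i j. if i = j then real (degree E i) else 0)"

definition ones_matrix :: "real^'n::finite^'n" where
  "ones_matrix = (\<chi> i j. 1)"

definition universal_adj :: "('n::finite \<Rightarrow> 'n \<Rightarrow> bool) \<Rightarrow> real \<Rightarrow> real \<Rightarrow> real \<Rightarrow> real \<Rightarrow> real^'n^'n" where
  "universal_adj E \<alpha> \<beta> \<gamma> \<delta> =
     \<alpha> *\<^sub>R adj_matrix E + \<beta> *\<^sub>R mat 1 + \<gamma> *\<^sub>R ones_matrix + \<delta> *\<^sub>R deg_matrix E"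

text \<open>Minimum universal rank: minimum rank over all universal adjacency matrices
  (alpha nonzero).  The set of ranks is a nonempty set of naturals bounded by CARD('n).\<close>
definition mur :: "('n::finite \<Rightarrow> 'n \<Rightarrow> bool) \<Rightarrow> nat" where
  "mur E = Min {rank (universal_adj E \<alpha> \<beta> \<gamma> \<delta>) | \<alpha> \<beta> \<gamma> \<delta>. \<alpha> \<noteq> 0}"

definition charpoly :: "real^'n::finite^'n \<Rightarrow> real poly" where
  "charpoly A = det (\<chi> i j. (if i = j then [:0, 1:] else 0) - [:A $ i $ j:])"

end

theory Submission
  imports Defs
begin

text \<open>The adjacency matrix of an \<open>r\<close>-regular graph is symmetric with the all-ones vector
  as eigenvector for \<open>r\<close>, so the spectral theorem yields an orthonormal eigenbasis containing
  the normalised all-ones vector. This basis diagonalises \<open>I\<close>, \<open>J\<close> and \<open>D = r I\<close> as well,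
  so \<open>\<alpha> A + \<beta> I + \<gamma> J + \<delta> D\<close> has eigenvalues \<open>\<alpha> \<lambda>\<^sub>i + \<beta> + \<delta> r\<close> on the other basis vectors
  and an eigenvalue on the all-ones vector that \<open>\<gamma>\<close> moves freely. The rank is the number of
  nonzero eigenvalues. At most \<open>m\<close> of the \<open>\<lambda>\<^sub>i\<close> equal \<open>-(\<beta> + \<delta> r)/\<alpha>\<close>, so the rank is at least
  \<open>n - 1 - m\<close>, with equality when this value is a most frequent \<open>\<lambda>\<^sub>i\<close> and \<open>\<gamma>\<close> makes the
  all-ones eigenvalue vanish.\<close>

lemma symmetric_matrix_inner_commute:
  fixes A :: "real^'n^'n"
  assumes "transpose A = A"
  shows "(A *v x) \<bullet> y = x \<bullet> (A *v y)"
  by (metis assms dot_lmul_matrix transpose_matrix_vector)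

lemma symmetric_matrix_orthogonal_eigenvector:
  fixes A :: "real^'n^'n"
  assumes "transpose A = A" "A *v v = \<mu> *\<^sub>R v" "orthogonal v y"
  shows "orthogonal v (A *v y)"
  using assms symmetric_matrix_inner_commute[OF assms(1), of v y]
  by (simp add: orthogonal_def)

lemma linear_le_quadratic_imp_zero:
  fixes b c :: real
  assumes "c \<ge> 0" "\<And>t. 2 * t * b \<le> t^2 * c"
  shows "b = 0"
proof -
  define t where "t = b / (c + 1)"
  have bt: "b = t * (c + 1)" unfolding t_def using assms(1) by simp
  have "t^2 * (c + 2) \<le> 0"
    using assms(2)[of t] unfolding bt by (simp add: power2_eq_square algebra_simps)
  with assms(1) have "t = 0" by (simp add: mult_le_0_iff)
  with bt show ?thesis by simp
qed

text \<open>A maximiser of the Rayleigh quotient on the unit sphere of an invariant subspace is an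
  eigenvector: the quadratic form stays below \<open>\<mu> |y|\<^sup>2\<close> along every line
  \<open>v + t w\<close> in the subspace, which forces the linear term \<open>w \<bullet> (A v - \<mu> v)\<close> to vanish.\<close>
lemma symmetric_matrix_eigenvector_in_subspace:
  fixes A :: "real^'n^'n"
  assumes sym: "transpose A = A" and U: "subspace U" and inv: "\<forall>x\<in>U. A *v x \<in> U"
    and nontriv: "x \<in> U" "x \<noteq> 0"
  obtains v \<mu> where "v \<in> U" "norm v = 1" "A *v v = \<mu> *\<^sub>R v"
proof -
  define S where "S = sphere 0 1 \<inter> U"
  have "compact S" unfolding S_def by (simp add: closed_subspace compact_Int_closed U)
  moreover have "(1 / norm x) *\<^sub>R x \<in> S" unfolding S_def using nontriv U by (simp add: subspace_scale)
  hence "S \<noteq> {}" by auto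
  moreover have "continuous_on S (\<lambda>y. y \<bullet> (A *v y))"
    by (intro continuous_on_inner continuous_on_id linear_continuous_on matrix_vector_mul_bounded_linear)
  ultimately obtain v where v: "v \<in> S" and vmax: "\<And>y. y \<in> S \<Longrightarrow> y \<bullet> (A *v y) \<le> v \<bullet> (A *v v)"
    by (metis continuous_attains_sup)
  define \<mu> where "\<mu> = v \<bullet> (A *v v)"
  have vU: "v \<in> U" and vn: "norm v = 1" using v unfolding S_def by auto
  have vv: "v \<bullet> v = 1" using vn by (simp add: norm_eq_1)
  have bound: "y \<bullet> (A *v y) \<le> \<mu> * (y \<bullet> y)" if "y \<in> U" for y
  proof (cases "y = 0")
    case False
    let ?z = "(1 / norm y) *\<^sub>R y"
    have "?z \<in> S" unfolding S_def using that False U by (simp add: subspace_scale)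
    hence "?z \<bullet> (A *v ?z) \<le> \<mu>" using vmax unfolding \<mu>_def by blast
    hence "(y \<bullet> (A *v y)) / (norm y)^2 \<le> \<mu>"
      by (simp add: matrix_scaleR_vector_ac scaleR_matrix_vector_assoc[symmetric] power2_eq_square)
    with False show ?thesis by (simp add: divide_le_eq power2_norm_eq_inner)
  qed simp
  define z where "z = A *v v - \<mu> *\<^sub>R v"
  have "w \<bullet> z = 0" if wU: "w \<in> U" for w
  proof (rule linear_le_quadratic_imp_zero)
    show "0 \<le> \<mu> * (w \<bullet> w) - w \<bullet> (A *v w)" using bound[OF wU] by simp
    fix t
    have Avw: "v \<bullet> (A *v w) = w \<bullet> (A *v v)"
      using symmetric_matrix_inner_commute[OF sym, of v w] by (simp add: inner_commute)
    have "A *v (v + t *\<^sub>R w) = A *v v + t *\<^sub>R (A *v w)"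
      by (simp add: matrix_vector_right_distrib matrix_scaleR_vector_ac scaleR_matrix_vector_assoc)
    hence quad: "(v + t *\<^sub>R w) \<bullet> (A *v (v + t *\<^sub>R w))
        = \<mu> + 2 * t * (w \<bullet> (A *v v)) + t^2 * (w \<bullet> (A *v w))"
      using Avw unfolding \<mu>_def
      by (simp add: inner_add_left inner_add_right power2_eq_square inner_commute[of "A *v v" w] distrib_left)
    have norm: "(v + t *\<^sub>R w) \<bullet> (v + t *\<^sub>R w) = 1 + 2 * t * (v \<bullet> w) + t^2 * (w \<bullet> w)"
      using vv by (simp add: inner_add_left inner_add_right power2_eq_square inner_commute[of w v] distrib_left)
    have "v + t *\<^sub>R w \<in> U" using vU wU U by (simp add: subspace_add subspace_scale)
    from bound[OF this] show "2 * t * (w \<bullet> z) \<le> t^2 * (\<mu> * (w \<bullet> w) - w \<bullet> (A *v w))"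
      unfolding quad norm z_def by (simp add: inner_diff_right inner_commute[of w v] algebra_simps)
  qed
  moreover have "z \<in> U" unfolding z_def using vU U inv by (simp add: subspace_diff subspace_scale)
  ultimately have "A *v v = \<mu> *\<^sub>R v" unfolding z_def by (metis inner_eq_zero_iff eq_iff_diff_eq_0)
  with vU vn show ?thesis by (rule that)
qed

lemma symmetric_matrix_orthonormal_eigenvectors_span_subspace:
  fixes A :: "real^'n^'n"
  assumes sym: "transpose A = A"
  shows "subspace U \<Longrightarrow> \<forall>x\<in>U. A *v x \<in> U \<Longrightarrow>
    \<exists>B. B \<subseteq> U \<and> pairwise orthogonal B \<and>
      (\<forall>x\<in>B. norm x = 1 \<and> (\<exists>c. A *v x = c *\<^sub>R x)) \<and> U \<subseteq> span B"
proof (induction "dim U" arbitrary: U rule: less_induct)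
  case less
  show ?case
  proof (cases "U \<subseteq> {0}")
    case True
    then show ?thesis by (intro exI[of _ "{}"]) auto
  next
    case False
    then obtain x where "x \<in> U" "x \<noteq> 0" by auto
    with sym less.prems obtain v \<mu> where vU: "v \<in> U" and vn: "norm v = 1" and Av: "A *v v = \<mu> *\<^sub>R v"
      by (metis symmetric_matrix_eigenvector_in_subspace)
    define U' where "U' = U \<inter> {y. orthogonal v y}"
    have sU': "subspace U'" unfolding U'_def
      using less.prems(1) subspace_orthogonal_to_vector[of v] by (rule subspace_inter)
    have invU': "\<forall>y\<in>U'. A *v y \<in> U'"
      using less.prems(2) symmetric_matrix_orthogonal_eigenvector[OF sym Av] unfolding U'_def by blast
    have "v \<notin> U'" using vn unfolding U'_def orthogonal_def by (auto simp: norm_eq_1)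
    hence "U' \<subset> U" using vU unfolding U'_def by auto
    hence "dim U' < dim U"
      using less.prems(1) sU' by (metis dim_psubset span_eq_iff)
    with sU' invU' obtain B' where
      B': "B' \<subseteq> U'" "pairwise orthogonal B'"
        "\<forall>x\<in>B'. norm x = 1 \<and> (\<exists>c. A *v x = c *\<^sub>R x)" "U' \<subseteq> span B'"
      using less.hyps by blast
    show ?thesis
    proof (intro exI[of _ "insert v B'"] conjI)
      show "insert v B' \<subseteq> U" using B'(1) vU unfolding U'_def by auto
      show "pairwise orthogonal (insert v B')"
        using B'(1,2) unfolding U'_def by (intro pairwise_orthogonal_insert) auto
      show "\<forall>x\<in>insert v B'. norm x = 1 \<and> (\<exists>c. A *v x = c *\<^sub>R x)" using B'(3) vn Av by auto
      show "U \<subseteq> span (insert v B')"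
      proof
        fix y assume "y \<in> U"
        hence "y - (v \<bullet> y) *\<^sub>R v \<in> U'" unfolding U'_def orthogonal_def
          using vU vn less.prems(1) by (simp add: subspace_diff subspace_scale inner_diff_right norm_eq_1)
        then show "y \<in> span (insert v B')" using B'(4) by (auto simp: span_breakdown_eq)
      qed
    qed
  qed
qed

definition orthonormal_eigenbasis :: "real^'n::finite^'n \<Rightarrow> ('n \<Rightarrow> real^'n) \<Rightarrow> ('n \<Rightarrow> real) \<Rightarrow> bool" where
  "orthonormal_eigenbasis A g d \<longleftrightarrow>
     (\<forall>i j. g i \<bullet> g j = (if i = j then 1 else 0)) \<and> (\<forall>j. A *v g j = d j *\<^sub>R g j)"

text \<open>The orthogonal complement of \<open>u\<close> is invariant, hence spanned by orthonormal eigenvectors.\<close>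
lemma symmetric_matrix_orthonormal_eigenbasis:
  fixes A :: "real^'n::finite^'n"
  assumes sym: "transpose A = A" and u: "norm u = 1" and Au: "A *v u = \<theta> *\<^sub>R u"
  obtains g d k where "orthonormal_eigenbasis A g d" "g k = u" "d k = \<theta>"
proof -
  have uu: "u \<bullet> u = 1" using u by (simp add: norm_eq_1)
  define U where "U = {y. orthogonal u y}"
  have "subspace U" unfolding U_def by (rule subspace_orthogonal_to_vector)
  moreover have "\<forall>y\<in>U. A *v y \<in> U"
    using symmetric_matrix_orthogonal_eigenvector[OF sym Au] unfolding U_def by blast
  ultimately obtain B where
    B: "B \<subseteq> U" "pairwise orthogonal B"
      "\<forall>x\<in>B. norm x = 1 \<and> (\<exists>c. A *v x = c *\<^sub>R x)" "U \<subseteq> span B"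
    using symmetric_matrix_orthonormal_eigenvectors_span_subspace[OF sym] by blast
  define C where "C = insert u B"
  have pC: "pairwise orthogonal C" unfolding C_def
    using B(1,2) unfolding U_def by (intro pairwise_orthogonal_insert) auto
  have nC: "\<forall>x\<in>C. norm x = 1 \<and> (\<exists>c. A *v x = c *\<^sub>R x)" unfolding C_def using B(3) u Au by auto
  have "independent C" using pairwise_orthogonal_independent[OF pC] nC by force
  moreover have "span C = UNIV"
  proof -
    have "y - (u \<bullet> y) *\<^sub>R u \<in> span B" for y
      using B(4) uu unfolding U_def orthogonal_def by (auto simp: inner_diff_right)
    then have "y \<in> span C" for y unfolding C_def using span_breakdown_eq by blast
    then show ?thesis by auto
  qed
  ultimately have "card C = CARD('n)"
    using dim_span_eq_card_independent[of C] by simp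
  then obtain g where g: "bij_betw g (UNIV::'n set) C"
    using finite_same_card_bij[of "UNIV::'n set" C] pairwise_orthogonal_imp_finite[OF pC] by auto
  define k where "k = inv_into UNIV g u"
  have gk: "g k = u" unfolding k_def using bij_betw_inv_into_right[OF g, of u] C_def by simp
  have gC: "g j \<in> C" for j using bij_betw_apply[OF g] by simp
  define d where "d j = g j \<bullet> (A *v g j)" for j
  have orth: "g i \<bullet> g j = (if i = j then 1 else 0)" for i j
  proof (cases "i = j")
    case False
    then have "g i \<noteq> g j" using bij_betw_imp_inj_on[OF g] unfolding inj_on_def by blast
    then show ?thesis using pC gC[of i] gC[of j] False unfolding pairwise_def orthogonal_def by auto
  qed (use nC gC in \<open>auto simp: norm_eq_1\<close>)
  have ev: "A *v g j = d j *\<^sub>R g j" for j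
  proof -
    obtain c where "A *v g j = c *\<^sub>R g j" using nC gC[of j] by blast
    moreover from this have "d j = c" unfolding d_def using orth[of j j] by simp
    ultimately show ?thesis by simp
  qed
  have "d k = \<theta>" unfolding d_def gk Au using uu by simp
  moreover have "orthonormal_eigenbasis A g d"
    unfolding orthonormal_eigenbasis_def using orth ev by blast
  ultimately show ?thesis using gk that by blast
qed

definition matrix_of_columns :: "('n::finite \<Rightarrow> 'a^'m::finite) \<Rightarrow> 'a^'n^'m" where
  "matrix_of_columns g = (\<chi> i j. g j $ i)"

definition diag_matrix :: "('n::finite \<Rightarrow> 'a::zero) \<Rightarrow> 'a^'n^'n" where
  "diag_matrix e = (\<chi> i j. if i = j then e i else 0)"

lemma orthonormal_eigenbasis_orthogonal_matrix:
  assumes "orthonormal_eigenbasis A g d"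
  shows "orthogonal_matrix (matrix_of_columns g)"
  using assms
  by (simp add: orthogonal_matrix orthonormal_eigenbasis_def vec_eq_iff matrix_matrix_mult_def
      matrix_of_columns_def transpose_def mat_def inner_vec_def)

lemma orthonormal_eigenbasis_diagonalizes:
  assumes "orthonormal_eigenbasis A g d"
  shows "transpose (matrix_of_columns g) ** A ** matrix_of_columns g = diag_matrix d"
proof -
  let ?P = "matrix_of_columns g"
  have "(A ** ?P) $ i $ j = (?P ** diag_matrix d) $ i $ j" for i j
  proof -
    have "(A ** ?P) $ i $ j = (A *v g j) $ i"
      by (simp add: matrix_matrix_mult_def matrix_vector_mult_def matrix_of_columns_def)
    also have "\<dots> = d j * g j $ i" using assms by (simp add: orthonormal_eigenbasis_def)
    also have "\<dots> = (?P ** diag_matrix d) $ i $ j"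
      by (simp add: matrix_matrix_mult_def matrix_of_columns_def diag_matrix_def if_distrib cong: if_cong)
    finally show ?thesis .
  qed
  hence "A ** ?P = ?P ** diag_matrix d" by (simp add: vec_eq_iff)
  hence "transpose ?P ** A ** ?P = (transpose ?P ** ?P) ** diag_matrix d"
    by (simp add: matrix_mul_assoc[symmetric])
  also have "\<dots> = diag_matrix d"
    using orthonormal_eigenbasis_orthogonal_matrix[OF assms] by (simp add: orthogonal_matrix)
  finally show ?thesis .
qed

lemma rank_diag_matrix: "rank (diag_matrix e :: real^'n::finite^'n) = card {j. e j \<noteq> 0}"
proof -
  have diag_mv: "(diag_matrix e *v x) $ i = e i * x $ i" for x i
  proof -
    have "(diag_matrix e *v x) $ i = (\<Sum>j\<in>UNIV. (if i = j then e i else 0) * x $ j)"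
      by (simp add: diag_matrix_def matrix_vector_mult_def)
    also have "\<dots> = (\<Sum>j\<in>UNIV. if i = j then e i * x $ j else 0)" by (rule sum.cong) auto
    finally show ?thesis by simp
  qed
  have "range (\<lambda>x. diag_matrix e *v x) = {x. \<forall>i. i \<notin> {j. e j \<noteq> 0} \<longrightarrow> x $ i = 0}"
  proof (intro set_eqI iffI)
    fix y :: "real^'n" assume "y \<in> {x. \<forall>i. i \<notin> {j. e j \<noteq> 0} \<longrightarrow> x $ i = 0}"
    hence "y = diag_matrix e *v (\<chi> i. y $ i / e i)" by (auto simp: vec_eq_iff diag_mv)
    then show "y \<in> range (\<lambda>x. diag_matrix e *v x)" by blast
  qed (auto simp: diag_mv)
  then show ?thesis
    using dim_substandard_cart[where 'a=real and 'n='n, of "{j. e j \<noteq> 0}"]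
    by (simp only: rank_dim_range dim_vec_eq)
qed

lemma rank_orthogonal_conj:
  fixes P M :: "real^'n^'n"
  assumes "orthogonal_matrix P"
  shows "rank (transpose P ** M ** P) = rank M"
proof (rule antisym)
  show "rank (transpose P ** M ** P) \<le> rank M"
    by (metis rank_mul_le_left rank_mul_le_right order_trans)
  have "P ** (transpose P ** M ** P) ** transpose P = (P ** transpose P) ** M ** (P ** transpose P)"
    by (simp only: matrix_mul_assoc)
  also have "\<dots> = M" using assms by (simp add: orthogonal_matrix_def)
  finally show "rank M \<le> rank (transpose P ** M ** P)"
    by (metis rank_mul_le_left rank_mul_le_right order_trans)
qed

lemma rank_orthonormal_eigenbasis:
  assumes "orthonormal_eigenbasis A g d"
  shows "rank A = card {j. d j \<noteq> 0}"
  using rank_orthogonal_conj[OF orthonormal_eigenbasis_orthogonal_matrix[OF assms], of A]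
  by (simp add: orthonormal_eigenbasis_diagonalizes[OF assms] rank_diag_matrix)

lemma poly_det: "poly (det M) x = det (map_matrix (\<lambda>p. poly p x) M)"
  by (simp add: det_def poly_sum poly_prod)

lemma poly_charpoly: "poly (charpoly A) x = det (mat x - A)"
  unfolding charpoly_def poly_det by (rule arg_cong[where f = det]) (simp add: vec_eq_iff mat_def)

lemma det_orthogonal_conj:
  fixes P M :: "real^'n^'n"
  assumes "orthogonal_matrix P"
  shows "det (transpose P ** M ** P) = det M"
proof -
  have "det P * det P = 1"
    using det_mul[of "transpose P" P] assms by (simp add: orthogonal_matrix det_transpose)
  then show ?thesis by (simp add: det_mul det_transpose)
qed

lemma orthogonal_conj_mat_diff:
  fixes P M :: "real^'n^'n"
  assumes "orthogonal_matrix P"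
  shows "transpose P ** (mat x - M) ** P = mat x - transpose P ** M ** P"
proof -
  have "transpose P ** (mat x - M) ** P = transpose P ** mat x ** P - transpose P ** M ** P"
    by (simp add: vec_eq_iff matrix_matrix_mult_def algebra_simps sum_subtractf)
  moreover have "transpose P ** mat x ** P = mat x"
  proof -
    have "mat x = x *\<^sub>R (mat 1 :: real^'n^'n)" by (simp add: vec_eq_iff mat_def)
    hence "transpose P ** mat x ** P = x *\<^sub>R (transpose P ** P)"
      by (simp only: matrix_scalar_ac scalar_matrix_assoc matrix_mul_rid)
    also have "\<dots> = mat x" using assms by (simp add: orthogonal_matrix vec_eq_iff mat_def)
    finally show ?thesis .
  qed
  ultimately show ?thesis by simp
qed

lemma charpoly_orthonormal_eigenbasis:
  assumes "orthonormal_eigenbasis A g d"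
  shows "charpoly A = (\<Prod>j\<in>UNIV. [:- d j, 1:])"
proof (rule poly_ext)
  fix x
  let ?P = "matrix_of_columns g"
  have P: "orthogonal_matrix ?P" by (rule orthonormal_eigenbasis_orthogonal_matrix[OF assms])
  have "poly (charpoly A) x = det (transpose ?P ** (mat x - A) ** ?P)"
    by (simp add: poly_charpoly det_orthogonal_conj[OF P])
  also have "\<dots> = det (mat x - diag_matrix d)"
    by (simp add: orthogonal_conj_mat_diff[OF P] orthonormal_eigenbasis_diagonalizes[OF assms])
  also have "\<dots> = (\<Prod>j\<in>UNIV. x - d j)"
    by (subst det_diagonal) (simp_all add: mat_def diag_matrix_def)
  also have "\<dots> = poly (\<Prod>j\<in>UNIV. [:- d j, 1:]) x" by (simp add: poly_prod)
  finally show "poly (charpoly A) x = poly (\<Prod>j\<in>UNIV. [:- d j, 1:]) x" .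
qed

lemma order_linear_factor: "order a [:- c, 1:] = (if c = a then 1 else (0::nat))"
  using order_power_n_n[of a 1] by (auto intro: order_0I)

lemma order_prod_mset_linear_factors:
  "order a (\<Prod>x\<in>#M. [:- x, 1::'a::idom:]) = count M a"
proof (induction M)
  case (add x M)
  have "[:- x, 1::'a:] * (\<Prod>x\<in>#M. [:- x, 1:]) \<noteq> 0" by (auto simp: prod_mset_zero_iff simp del: mult_pCons_left)
  hence "order a ([:- x, 1:] * (\<Prod>x\<in>#M. [:- x, 1::'a:])) = order a [:- x, 1:] + order a (\<Prod>x\<in>#M. [:- x, 1:])"
    by (rule order_mult)
  with add.IH show ?case by (simp add: order_linear_factor)
qed (simp add: order_0I)

lemma prod_mset_linear_factors_inj:
  assumes "(\<Prod>x\<in>#M. [:- x, 1::'a::idom:]) = (\<Prod>x\<in>#N. [:- x, 1:])"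
  shows "M = N"
  by (metis assms multiset_eqI order_prod_mset_linear_factors)

lemma count_image_mset_mset_set:
  assumes "finite A"
  shows "count (image_mset f (mset_set A)) x = card {a\<in>A. f a = x}"
  using assms by (simp add: count_image_mset Int_def conj_commute)

lemma orthonormal_eigenbasis_spectrum:
  assumes "orthonormal_eigenbasis A g d" and "d k = \<theta>"
    and "charpoly A = [:- \<theta>, 1:] * prod_list (map (\<lambda>x. [:- x, 1:]) ls)"
  shows "image_mset d (mset_set (- {k})) = mset ls"
proof -
  have "image_mset d (mset_set UNIV) = add_mset \<theta> (image_mset d (mset_set (- {k})))"
    using assms(2) by (metis Compl_eq_Diff_UNIV finite mset_set.remove image_mset_add_mset UNIV_I)
  moreover have "(\<Prod>x\<in>#image_mset d (mset_set UNIV). [:- x, 1:])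
      = (\<Prod>x\<in>#add_mset \<theta> (mset ls). [:- x, 1:])"
    using charpoly_orthonormal_eigenbasis[OF assms(1)] assms(3)
    by (simp add: prod_unfold_prod_mset prod_mset_prod_list[symmetric] image_mset.compositionality o_def)
  ultimately show ?thesis by (metis prod_mset_linear_factors_inj add_mset_add_mset_same_iff)
qed

lemma orthonormal_eigenbasis_multiplicity:
  assumes "orthonormal_eigenbasis A g d" and "d k = \<theta>"
    and "charpoly A = [:- \<theta>, 1:] * prod_list (map (\<lambda>x. [:- x, 1:]) ls)"
  shows "card {j. j \<noteq> k \<and> d j = c} = count (mset ls) c"
proof -
  have "card {j. j \<noteq> k \<and> d j = c} = count (image_mset d (mset_set (- {k}))) c"
    by (simp add: count_image_mset_mset_set)
  then show ?thesis by (simp add: orthonormal_eigenbasis_spectrum[OF assms])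
qed

lemma adj_matrix_symmetric:
  assumes "simple_graph E"
  shows "transpose (adj_matrix E) = adj_matrix E"
  using assms unfolding simple_graph_def by (auto simp: adj_matrix_def transpose_def vec_eq_iff)

lemma adj_matrix_regular_ones:
  assumes "regular E r"
  shows "adj_matrix E *v (\<chi> i. 1) = real r *\<^sub>R (\<chi> i. 1)"
proof -
  have "(adj_matrix E *v (\<chi> i. 1)) $ i = real (card {j. E i j})" for i
    by (simp add: adj_matrix_def matrix_vector_mult_def sum.If_cases)
  with assms show ?thesis by (simp add: vec_eq_iff regular_def degree_def)
qed

lemma deg_matrix_regular:
  assumes "regular E r"
  shows "deg_matrix E = real r *\<^sub>R mat 1"
  using assms by (simp add: vec_eq_iff deg_matrix_def mat_def regular_def)

lemma regular_graph_adj_matrix_eigenbasis: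
  fixes E :: "'n::finite \<Rightarrow> 'n \<Rightarrow> bool"
  assumes "simple_graph E" "regular E r"
  obtains g d k where "orthonormal_eigenbasis (adj_matrix E) g d"
    "g k = (1 / sqrt CARD('n)) *\<^sub>R (\<chi> i. 1)" "d k = real r"
proof (rule symmetric_matrix_orthonormal_eigenbasis[OF adj_matrix_symmetric[OF assms(1)]])
  have "norm (\<chi> (i::'n). (1::real)) = sqrt CARD('n)"
    by (simp add: norm_eq_sqrt_inner inner_vec_def)
  then show "norm ((1 / sqrt CARD('n)) *\<^sub>R (\<chi> (i::'n). (1::real))) = 1" by simp
  show "adj_matrix E *v ((1 / sqrt CARD('n)) *\<^sub>R (\<chi> i. 1)) = real r *\<^sub>R (1 / sqrt CARD('n)) *\<^sub>R (\<chi> i. 1)"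
    using adj_matrix_regular_ones[OF assms(2)]
    by (simp add: matrix_scaleR_vector_ac scaleR_matrix_vector_assoc[symmetric])
qed (rule that)

lemma card_others_not:
  "card {j::'n::finite. j \<noteq> k \<and> \<not> P j} = CARD('n) - 1 - card {j. j \<noteq> k \<and> P j}"
proof -
  have "{j. j \<noteq> k \<and> \<not> P j} = (UNIV - {k}) - {j. j \<noteq> k \<and> P j}" by auto
  then show ?thesis by (simp add: card_Diff_subset card_Diff_singleton subset_iff)
qed

context
  fixes E :: "'n::finite \<Rightarrow> 'n \<Rightarrow> bool" and r :: nat and g :: "'n \<Rightarrow> real^'n"
    and d :: "'n \<Rightarrow> real" and k :: 'n
  assumes regular: "regular E r"
    and eigenbasis: "orthonormal_eigenbasis (adj_matrix E) g d"
    and ones_vector: "g k = (1 / sqrt CARD('n)) *\<^sub>R (\<chi> i. 1)"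
begin

lemma ones_matrix_eigenbasis: "ones_matrix *v g j = (if j = k then real CARD('n) else 0) *\<^sub>R g j"
proof -
  have ones: "(\<chi> i. 1) = sqrt CARD('n) *\<^sub>R g k" unfolding ones_vector by simp
  have "ones_matrix *v x = ((\<chi> i. 1) \<bullet> x) *\<^sub>R (\<chi> i. 1)" for x :: "real^'n"
    by (simp add: vec_eq_iff ones_matrix_def matrix_vector_mult_def inner_vec_def)
  moreover have "(\<chi> i. 1) \<bullet> g j = sqrt CARD('n) * (if k = j then 1 else 0)"
    using eigenbasis unfolding ones by (simp add: orthonormal_eigenbasis_def)
  ultimately show ?thesis by (cases "j = k") (auto simp: ones)
qed

lemma universal_adj_eigenbasis:
  "orthonormal_eigenbasis (universal_adj E \<alpha> \<beta> \<gamma> \<delta>) g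
     (\<lambda>j. \<alpha> * d j + \<beta> + \<delta> * real r + (if j = k then \<gamma> * real CARD('n) else 0))"
proof -
  have "universal_adj E \<alpha> \<beta> \<gamma> \<delta> *v g j
      = \<alpha> *\<^sub>R (adj_matrix E *v g j) + \<beta> *\<^sub>R (mat 1 *v g j) + \<gamma> *\<^sub>R (ones_matrix *v g j)
        + \<delta> *\<^sub>R (deg_matrix E *v g j)" for j
    unfolding universal_adj_def by (simp only: matrix_vector_mult_add_rdistrib scaleR_matrix_vector_assoc)
  with eigenbasis show ?thesis
    unfolding orthonormal_eigenbasis_def ones_matrix_eigenbasis deg_matrix_regular[OF regular]
    by (simp add: scaleR_matrix_vector_assoc[symmetric] algebra_simps)
qed

lemma rank_universal_adj:
  "rank (universal_adj E \<alpha> \<beta> \<gamma> \<delta>)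
     = card {j. \<alpha> * d j + \<beta> + \<delta> * real r + (if j = k then \<gamma> * real CARD('n) else 0) \<noteq> 0}"
  by (rule rank_orthonormal_eigenbasis[OF universal_adj_eigenbasis])

lemma rank_universal_adj_ge:
  assumes "\<alpha> \<noteq> 0"
  shows "CARD('n) - 1 - card {j. j \<noteq> k \<and> d j = - (\<beta> + \<delta> * real r) / \<alpha>}
           \<le> rank (universal_adj E \<alpha> \<beta> \<gamma> \<delta>)"
proof -
  have "{j. j \<noteq> k \<and> d j \<noteq> - (\<beta> + \<delta> * real r) / \<alpha>}
      \<subseteq> {j. \<alpha> * d j + \<beta> + \<delta> * real r + (if j = k then \<gamma> * real CARD('n) else 0) \<noteq> 0}"
    using assms by (auto simp: field_simps)
  then show ?thesis
    unfolding rank_universal_adj card_others_not[symmetric] by (intro card_mono) auto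
qed

lemma rank_universal_adj_attains:
  assumes "d k = real r"
  shows "rank (universal_adj E 1 (- c) ((c - real r) / real CARD('n)) 0)
           = CARD('n) - 1 - card {j. j \<noteq> k \<and> d j = c}"
proof -
  have "{j. 1 * d j + - c + 0 * real r + (if j = k then (c - real r) / real CARD('n) * real CARD('n) else 0) \<noteq> 0}
      = {j. j \<noteq> k \<and> d j \<noteq> c}"
    using assms by auto
  then show ?thesis using card_others_not[of k "\<lambda>j. d j = c"] unfolding rank_universal_adj by simp
qed

end

lemma mur_eqI:
  fixes E :: "'n::finite \<Rightarrow> 'n \<Rightarrow> bool"
  assumes "\<And>\<alpha> \<beta> \<gamma> \<delta>. \<alpha> \<noteq> 0 \<Longrightarrow> m \<le> rank (universal_adj E \<alpha> \<beta> \<gamma> \<delta>)"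
    and "\<alpha> \<noteq> 0" and "rank (universal_adj E \<alpha> \<beta> \<gamma> \<delta>) = m"
  shows "mur E = m"
  unfolding mur_def
proof (rule Min_eqI)
  have "{rank (universal_adj E \<alpha> \<beta> \<gamma> \<delta>) | \<alpha> \<beta> \<gamma> \<delta>. \<alpha> \<noteq> 0} \<subseteq> {..CARD('n)}"
    using rank_bound by fastforce
  then show "finite {rank (universal_adj E \<alpha> \<beta> \<gamma> \<delta>) | \<alpha> \<beta> \<gamma> \<delta>. \<alpha> \<noteq> 0}"
    using finite_subset by blast
qed (use assms in blast)+

lemma count_le_max_multiplicity: "count (mset xs) c \<le> Max (insert 0 (count (mset xs) ` set xs))"
  by (cases "c \<in> set xs") (auto simp: count_eq_zero_iff)

lemma max_multiplicity_attained:
  obtains c where "count (mset xs) c = Max (insert 0 (count (mset xs) ` set xs))"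
proof (cases xs)
  case (Cons x xs')
  then have "Max (insert 0 (count (mset xs) ` set xs)) = Max (count (mset xs) ` set xs)"
    by (simp add: Max_insert)
  also have "\<dots> \<in> count (mset xs) ` set xs" using Cons by (intro Max_in) auto
  finally show ?thesis using that by (metis imageE)
qed (use that in simp)

theorem theorem11:
  fixes E :: "'n::finite \<Rightarrow> 'n \<Rightarrow> bool" and r :: nat and ls :: "real list"
  assumes "simple_graph E"
    and "connected_graph E"
    and "regular E r"
    and "length ls = CARD('n) - 1"
    and "charpoly (adj_matrix E) = [:- real r, 1:] * prod_list (map (\<lambda>x. [:- x, 1:]) ls)"
  shows "mur E = CARD('n) - (Max (insert 0 (count (mset ls) ` set ls)) + 1)"
proof -
  obtain g d k where eigenbasis: "orthonormal_eigenbasis (adj_matrix E) g d"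
    and ones: "g k = (1 / sqrt CARD('n)) *\<^sub>R (\<chi> i. 1)" and dk: "d k = real r"
    using regular_graph_adj_matrix_eigenbasis[OF assms(1,3)] .
  note multiplicity = orthonormal_eigenbasis_multiplicity[OF eigenbasis dk assms(5)]
  define m where "m = Max (insert 0 (count (mset ls) ` set ls))"
  obtain c where c: "count (mset ls) c = m"
    unfolding m_def by (rule max_multiplicity_attained)
  show ?thesis
    unfolding m_def[symmetric]
  proof (rule mur_eqI)
    fix \<alpha> \<beta> \<gamma> \<delta> :: real
    assume "\<alpha> \<noteq> 0"
    have "count (mset ls) (- (\<beta> + \<delta> * real r) / \<alpha>) \<le> m"
      unfolding m_def by (rule count_le_max_multiplicity)
    with rank_universal_adj_ge[OF assms(3) eigenbasis ones \<open>\<alpha> \<noteq> 0\<close>, of \<beta> \<delta> \<gamma>]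
    show "CARD('n) - (m + 1) \<le> rank (universal_adj E \<alpha> \<beta> \<gamma> \<delta>)"
      unfolding multiplicity by linarith
  next
    show "rank (universal_adj E 1 (- c) ((c - real r) / real CARD('n)) 0) = CARD('n) - (m + 1)"
      using rank_universal_adj_attains[OF assms(3) eigenbasis ones dk] by (simp add: multiplicity c)
  qed simp
qed

end
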